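(* Let $k$ be a field and $\Gamma\subset SL(2,k)$ a subgroup containing an element whose eigenvalues (in $\overline k$) have infinite order in $\overline k^{*}$. Then $\Gamma$ is Zariski-dense in $SL(2)$ if and only if there exist $\alpha,\beta\in\Gamma$ such that $$\mathrm{Tr}(\alpha^2\beta^2\alpha^2\beta^2)-\mathrm{Tr}(\alpha^4\beta^4)\neq 0.$$ *)

theory Defs
  imports "HOL-Analysis.Analysis" "HOL-Algebra.Algebraic_Closure_Type"
begin

definition SL2 :: "(('k::field)^2^2) set" where
  "SL2 = {A. det A = 1}"

definition subgroup_SL2 :: "(('k::field)^2^2) set \<Rightarrow> bool" where
  "subgroup_SL2 G \<longleftrightarrow> G \<subseteq> SL2 \<and> mat 1 \<in> G \<and>
     (\<forall>a\<in>G. \<forall>b\<in>G. a ** b \<in> G) \<and> (\<forall>a\<in>G. \<exists>b\<in>G. a ** b = mat 1)"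

primrec mpow :: "('k::semiring_1)^'n^'n \<Rightarrow> nat \<Rightarrow> 'k^'n^'n" where
  "mpow A 0 = mat 1"
| "mpow A (Suc n) = A ** mpow A n"

definition ac_mat :: "('k::field)^2^2 \<Rightarrow> 'k alg_closure^2^2" where
  "ac_mat A = (\<chi> i j. to_ac (A $ i $ j))"

definition eigenvalue_ac :: "('k::field)^2^2 \<Rightarrow> 'k alg_closure \<Rightarrow> bool" where
  "eigenvalue_ac A x \<longleftrightarrow> det (ac_mat A - mat x) = 0"

inductive_set poly_fun :: "(('a::comm_ring_1)^2^2 \<Rightarrow> 'a) set" where
  const: "(\<lambda>A. c) \<in> poly_fun"
| coord: "(\<lambda>A. A $ i $ j) \<in> poly_fun"
| add: "p \<in> poly_fun \<Longrightarrow> q \<in> poly_fun \<Longrightarrow> (\<lambda>A. p A + q A) \<in> poly_fun"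
| mult: "p \<in> poly_fun \<Longrightarrow> q \<in> poly_fun \<Longrightarrow> (\<lambda>A. p A * q A) \<in> poly_fun"

text \<open>Zariski density in SL(2): every polynomial (over the algebraic closure) vanishing
  on Gamma vanishes on all of SL(2) (points over the algebraic closure).\<close>
definition zariski_dense_SL2 :: "(('k::field)^2^2) set \<Rightarrow> bool" where
  "zariski_dense_SL2 G \<longleftrightarrow>
     (\<forall>p\<in>poly_fun. (\<forall>g\<in>G. p (ac_mat g) = 0) \<longrightarrow> (\<forall>A\<in>SL2. p A = 0))"

end

theory Submission
  imports Defs
begin

text \<open>Let S be the image of \<open>\<Gamma>\<close> in SL(2, K), K the algebraic closure of k, and
  \<open>\<Phi>(a, b) = tr(a\<^sup>2b\<^sup>2a\<^sup>2b\<^sup>2) - tr(a\<^sup>4b\<^sup>4)\<close>. Since \<open>\<Phi>\<close> is polynomial in each argument, it vanishes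
  on S \<times> S iff it vanishes on the Zariski closure of S, and it does not vanish on
  SL(2, K): \<open>\<Phi>(diag(x, 1/x), w) = (x\<^sup>2 - x\<^sup>-\<^sup>2)\<^sup>2\<close> for an element w of order 6. This gives one
  direction.

  Conversely, diagonalise the given element as \<open>g = P diag(l, 1/l) P\<^sup>-\<^sup>1\<close>. The entries of
  \<open>P diag(t, 1/t) P\<^sup>-\<^sup>1\<close> are Laurent polynomials in t, so a polynomial vanishing at all the
  powers \<open>g\<^sup>n\<close>, i.e. at infinitely many values \<open>t = l\<^sup>n\<close>, vanishes on the whole torus. Thus,
  after conjugation, the closure H is a group containing the diagonal torus T. Now \<open>\<Phi>(a, b) = 0\<close>
  whenever a and b are both upper triangular, both lower triangular, or both in the normaliser
  of T (their squares then lie in T and commute). So if \<open>\<Phi>\<close> does not vanish on H, then H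
  has elements outside each of these subgroups; conjugating them by torus elements, and using
  square roots in K, produces every upper and every lower unipotent matrix, and these together
  with T generate SL(2, K).\<close>

no_notation fps_nth (infixl "$" 75)
  \<comment> \<open>Formal power series also use \<open>$\<close> for indexing; here it always indexes vectors.\<close>

section \<open>Two-by-two matrices\<close>

definition mat2 :: "'a::zero \<Rightarrow> 'a \<Rightarrow> 'a \<Rightarrow> 'a \<Rightarrow> 'a^2^2" where
  "mat2 a b c d = (\<chi> i j. if i = 1 then (if j = 1 then a else b) else (if j = 1 then c else d))"

lemma mat2_nth [simp]:
  "mat2 a b c d $ 1 $ 1 = a" "mat2 a b c d $ 1 $ 2 = b"
  "mat2 a b c d $ 2 $ 1 = c" "mat2 a b c d $ 2 $ 2 = d"
  by (simp_all add: mat2_def)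

lemma mat2_eta: "A = mat2 (A$1$1) (A$1$2) (A$2$1) (A$2$2)"
  by (simp add: vec_eq_iff forall_2)

lemma mat2_cases: obtains a b c d where "A = mat2 a b c d"
  using mat2_eta by blast

lemma mat2_eq_iff [simp]:
  "mat2 a b c d = mat2 a' b' c' d' \<longleftrightarrow> a = a' \<and> b = b' \<and> c = c' \<and> d = d'"
  by (auto simp add: vec_eq_iff forall_2)

lemma mat2_mult [simp]:
  "mat2 a b c d ** mat2 a' b' c' d' =
     mat2 (a*a' + b*c') (a*b' + b*d') (c*a' + d*c') (c*b' + d*d')"
  by (simp add: vec_eq_iff forall_2 matrix_matrix_mult_def sum_2)

lemma mat_eq_mat2: "mat x = mat2 x 0 0 x"
  by (simp add: vec_eq_iff forall_2 mat_def)

lemma mat2_diff [simp]: "mat2 a b c d - mat2 a' b' c' d' = mat2 (a-a') (b-b') (c-c') (d-d')"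
  by (simp add: vec_eq_iff forall_2)

lemma det_mat2 [simp]: "det (mat2 a b c d) = a*d - b*c"
  by (simp add: det_2)

lemma trace_mat2 [simp]: "trace (mat2 a b c d) = a + d"
  by (simp add: trace_def sum_2)

lemma transpose_mat2 [simp]: "transpose (mat2 a b c d) = mat2 a c b d"
  by (simp add: vec_eq_iff forall_2 transpose_def)

definition adj2 :: "('a::comm_ring_1)^2^2 \<Rightarrow> 'a^2^2" where
  "adj2 A = mat2 (A$2$2) (- A$1$2) (- A$2$1) (A$1$1)"

lemma adj2_mat2 [simp]: "adj2 (mat2 a b c d) = mat2 d (-b) (-c) a"
  by (simp add: adj2_def)

lemma mult_adj2: "det A = 1 \<Longrightarrow> A ** adj2 A = mat 1"
  by (cases A rule: mat2_cases) (auto simp: mat_eq_mat2 algebra_simps)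

lemma adj2_mult: "det A = 1 \<Longrightarrow> adj2 A ** A = mat 1"
  by (cases A rule: mat2_cases) (auto simp: mat_eq_mat2 algebra_simps)

lemma right_inverse_eq_adj2:
  assumes "det A = 1" "A ** B = mat 1"
  shows "B = adj2 A"
  by (metis adj2_mult assms matrix_mul_assoc matrix_mul_lid matrix_mul_rid)

definition diag2 :: "'a \<Rightarrow> ('a::field)^2^2" where
  "diag2 t = mat2 t 0 0 (1/t)"

lemma diag2_mult [simp]: "diag2 s ** diag2 t = diag2 (s * t)"
  by (simp add: diag2_def)

lemma diag2_1 [simp]: "diag2 1 = mat 1"
  by (simp add: diag2_def mat_eq_mat2)

lemma mpow_diag2: "mpow (diag2 t) n = diag2 (t ^ n)"
  by (induction n) simp_all

lemma conj_diag2_nth: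
  "(P ** diag2 t ** Q) $ i $ j = P$i$1 * Q$1$j * t + P$i$2 * Q$2$j / t"
  by (simp add: diag2_def matrix_matrix_mult_def sum_2)

definition upper_unipotent :: "'a \<Rightarrow> ('a::field)^2^2" where
  "upper_unipotent u = mat2 1 u 0 1"

definition lower_unipotent :: "'a \<Rightarrow> ('a::field)^2^2" where
  "lower_unipotent u = mat2 1 0 u 1"

lemma mpow_2: "mpow A 2 = A ** A"
  by (simp add: numeral_2_eq_2)

lemma mpow_4: "mpow A 4 = A ** A ** A ** A"
  by (simp add: numeral_eq_Suc matrix_mul_assoc)

lemma mpow_conj:
  assumes "P ** Q = mat 1" "Q ** P = mat 1"
  shows "mpow (Q ** A ** P) n = Q ** mpow A n ** P"
proof (induction n)
  case 0
  show ?case using assms(2) by simp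
next
  case (Suc n)
  have "mpow (Q ** A ** P) (Suc n) = Q ** A ** (P ** Q) ** mpow A n ** P"
    by (simp add: Suc matrix_mul_assoc)
  then show ?case using assms(1) by (simp add: matrix_mul_assoc)
qed

lemma ac_mat_mat2 [simp]: "ac_mat (mat2 a b c d) = mat2 (to_ac a) (to_ac b) (to_ac c) (to_ac d)"
  by (simp add: vec_eq_iff forall_2 ac_mat_def)

lemma ac_mat_mult: "ac_mat (A ** B) = ac_mat A ** ac_mat B"
  by (simp add: vec_eq_iff matrix_matrix_mult_def to_ac_sum ac_mat_def)

lemma ac_mat_one: "ac_mat (mat 1) = mat 1"
  by (simp add: vec_eq_iff mat_def ac_mat_def)

lemma ac_mat_mpow: "ac_mat (mpow A n) = mpow (ac_mat A) n"
  by (induction n) (simp_all add: ac_mat_mult ac_mat_one)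

lemma trace_ac_mat: "trace (ac_mat A) = to_ac (trace A)"
  by (cases A rule: mat2_cases) simp

lemma det_ac_mat: "det (ac_mat A) = to_ac (det A)"
  by (cases A rule: mat2_cases) simp

section \<open>Subgroups of SL(2)\<close>

lemma subgroup_SL2_det: "subgroup_SL2 H \<Longrightarrow> A \<in> H \<Longrightarrow> det A = 1"
  by (auto simp: subgroup_SL2_def SL2_def)

lemma subgroup_SL2_mult: "subgroup_SL2 H \<Longrightarrow> A \<in> H \<Longrightarrow> B \<in> H \<Longrightarrow> A ** B \<in> H"
  by (auto simp: subgroup_SL2_def)

lemma subgroup_SL2_adj2:
  assumes "subgroup_SL2 H" "A \<in> H"
  shows "adj2 A \<in> H"
proof -
  obtain B where "B \<in> H" "A ** B = mat 1"
    using assms unfolding subgroup_SL2_def by blast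
  then show ?thesis
    using right_inverse_eq_adj2 subgroup_SL2_det[OF assms] by blast
qed

lemma subgroup_SL2_mpow: "subgroup_SL2 H \<Longrightarrow> A \<in> H \<Longrightarrow> mpow A n \<in> H"
  by (induction n) (auto simp: subgroup_SL2_def)

lemma subgroup_SL2I:
  assumes "\<And>A. A \<in> H \<Longrightarrow> det A = 1" "mat 1 \<in> H"
    and "\<And>A B. A \<in> H \<Longrightarrow> B \<in> H \<Longrightarrow> A ** B \<in> H" "\<And>A. A \<in> H \<Longrightarrow> adj2 A \<in> H"
  shows "subgroup_SL2 H"
  unfolding subgroup_SL2_def SL2_def using assms mult_adj2 by blast

lemma subgroup_SL2_conj:
  fixes H :: "(('a::field)^2^2) set"
  assumes H: "subgroup_SL2 H" and PQ: "P ** Q = mat 1" "Q ** P = mat 1"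
  shows "subgroup_SL2 {A. P ** A ** Q \<in> H}"
proof (rule subgroup_SL2I; clarsimp)
  have PQ': "P ** (Q ** R) = R" "Q ** (P ** R) = R" for R :: "'a^2^2"
    by (simp_all add: matrix_mul_assoc PQ)
  have "det P * det Q = 1"
    using PQ(1) det_mul[of P Q] by simp
  then show det: "det A = 1" if "P ** A ** Q \<in> H" for A
    using subgroup_SL2_det[OF H that] by (simp add: det_mul algebra_simps)
  show "P ** adj2 A ** Q \<in> H" if A: "P ** A ** Q \<in> H" for A
  proof -
    have "(P ** A ** Q) ** (P ** adj2 A ** Q) = P ** (A ** adj2 A) ** Q"
      by (simp add: matrix_mul_assoc[symmetric] PQ')
    also have "\<dots> = mat 1"
      using det[OF A] by (simp add: mult_adj2 PQ)
    finally have "P ** adj2 A ** Q = adj2 (P ** A ** Q)"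
      by (rule right_inverse_eq_adj2[OF subgroup_SL2_det[OF H A]])
    then show ?thesis
      using subgroup_SL2_adj2[OF H A] by simp
  qed
  show "P ** Q \<in> H"
    using H PQ(1) unfolding subgroup_SL2_def by simp
  show "P ** (A ** B) ** Q \<in> H" if "P ** A ** Q \<in> H" "P ** B ** Q \<in> H" for A B
    using subgroup_SL2_mult[OF H that] by (simp add: matrix_mul_assoc[symmetric] PQ')
qed

lemma subgroup_SL2_transpose:
  assumes H: "subgroup_SL2 H"
  shows "subgroup_SL2 (transpose ` H)"
proof (rule subgroup_SL2I; clarsimp)
  show "det A = 1" if "A \<in> H" for A
    using subgroup_SL2_det[OF H that] by simp
  show "mat 1 \<in> transpose ` H"
    using H transpose_mat[of 1] unfolding subgroup_SL2_def by (metis image_eqI)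
  show "transpose A ** transpose B \<in> transpose ` H" if "A \<in> H" "B \<in> H" for A B
    using subgroup_SL2_mult[OF H that(2,1)] by (simp add: matrix_transpose_mul[symmetric])
  have "adj2 (transpose A) = transpose (adj2 A)" for A :: "'a^2^2"
    by (cases A rule: mat2_cases) simp
  then show "adj2 (transpose A) \<in> transpose ` H" if "A \<in> H" for A
    using subgroup_SL2_adj2[OF H that] by simp
qed

lemma subgroup_SL2_ac_mat_image:
  fixes G :: "(('k::field)^2^2) set"
  assumes G: "subgroup_SL2 G"
  shows "subgroup_SL2 (ac_mat ` G)"
proof (rule subgroup_SL2I; clarsimp)
  show "det (ac_mat A) = 1" if "A \<in> G" for A
    using subgroup_SL2_det[OF G that] by (simp add: det_ac_mat)
  show "mat 1 \<in> ac_mat ` G"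
    using G ac_mat_one unfolding subgroup_SL2_def by (metis image_eqI)
  show "ac_mat A ** ac_mat B \<in> ac_mat ` G" if "A \<in> G" "B \<in> G" for A B
    using subgroup_SL2_mult[OF G that] by (metis ac_mat_mult image_eqI)
  have "adj2 (ac_mat A) = ac_mat (adj2 A)" for A :: "'k^2^2"
    by (cases A rule: mat2_cases) simp
  then show "adj2 (ac_mat A) \<in> ac_mat ` G" if "A \<in> G" for A
    using subgroup_SL2_adj2[OF G that] by (metis image_eqI)
qed

section \<open>Polynomial functions and Zariski closure\<close>

definition poly_map :: "(('a::comm_ring_1)^2^2 \<Rightarrow> 'a^2^2) \<Rightarrow> bool" where
  "poly_map F \<longleftrightarrow> (\<forall>i j. (\<lambda>A. F A $ i $ j) \<in> poly_fun)"

lemma poly_fun_comp: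
  assumes "p \<in> poly_fun" "poly_map F"
  shows "(\<lambda>A. p (F A)) \<in> poly_fun"
  using assms(1)
proof induction
  case (coord i j)
  then show ?case using assms(2) by (simp add: poly_map_def)
qed (auto intro: poly_fun.intros)

lemma poly_fun_diff:
  assumes "p \<in> poly_fun" "q \<in> poly_fun"
  shows "(\<lambda>A. p A - q A) \<in> poly_fun"
  using poly_fun.add[OF assms(1) poly_fun.mult[OF poly_fun.const[of "-1"] assms(2)]] by simp

lemma poly_map_const: "poly_map (\<lambda>A. M)"
  by (simp add: poly_map_def poly_fun.const)

lemma poly_map_id: "poly_map (\<lambda>A. A)"
  by (simp add: poly_map_def poly_fun.coord)

lemma poly_map_mult: "poly_map F \<Longrightarrow> poly_map G \<Longrightarrow> poly_map (\<lambda>A. F A ** G A)"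
  unfolding poly_map_def matrix_matrix_mult_def
  by (simp add: sum_2 poly_fun.add poly_fun.mult)

lemma poly_map_mpow: "poly_map F \<Longrightarrow> poly_map (\<lambda>A. mpow (F A) n)"
  by (induction n) (auto intro: poly_map_mult poly_map_const)

lemma poly_map_adj2: "poly_map adj2"
proof -
  have "(\<lambda>A. - (A $ i $ j)) \<in> poly_fun" for i j :: 2
    using poly_fun_diff[OF poly_fun.const[of 0] poly_fun.coord] by simp
  then show ?thesis
    unfolding poly_map_def adj2_def by (auto simp: forall_2 mat2_def poly_fun.coord)
qed

lemma poly_fun_trace: "poly_map F \<Longrightarrow> (\<lambda>A. trace (F A)) \<in> poly_fun"
  unfolding poly_map_def trace_def by (simp add: sum_2 poly_fun.add)

lemma poly_fun_det: "(\<lambda>A::('a::comm_ring_1)^2^2. det A) \<in> poly_fun"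
  unfolding det_2 by (intro poly_fun_diff poly_fun.mult poly_fun.coord)

definition zariski_closure :: "(('a::comm_ring_1)^2^2) set \<Rightarrow> ('a^2^2) set" where
  "zariski_closure S = {A. \<forall>p\<in>poly_fun. (\<forall>s\<in>S. p s = 0) \<longrightarrow> p A = 0}"

lemma zariski_closureD:
  "A \<in> zariski_closure S \<Longrightarrow> p \<in> poly_fun \<Longrightarrow> (\<And>s. s \<in> S \<Longrightarrow> p s = 0) \<Longrightarrow> p A = 0"
  unfolding zariski_closure_def by blast

lemma subset_zariski_closure: "S \<subseteq> zariski_closure S"
  by (auto simp: zariski_closure_def)

lemma zariski_closure_poly_map:
  assumes "poly_map F" "F ` S \<subseteq> zariski_closure S" "A \<in> zariski_closure S"
  shows "F A \<in> zariski_closure S"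
  unfolding zariski_closure_def
proof (intro CollectI ballI impI)
  fix p assume p: "p \<in> poly_fun" and "\<forall>s\<in>S. p s = 0"
  then have "p (F s) = 0" if "s \<in> S" for s
    using assms(2) that by (auto intro: zariski_closureD)
  then show "p (F A) = 0"
    using zariski_closureD[OF assms(3) poly_fun_comp[OF p assms(1)]] by blast
qed

lemma subgroup_SL2_zariski_closure:
  assumes H: "subgroup_SL2 H"
  shows "subgroup_SL2 (zariski_closure H)"
proof (rule subgroup_SL2I)
  have "(\<lambda>A. det A - 1) \<in> poly_fun"
    by (intro poly_fun_diff poly_fun_det poly_fun.const)
  then show "det A = 1" if "A \<in> zariski_closure H" for A
    using zariski_closureD[OF that] subgroup_SL2_det[OF H] by force
  show "mat 1 \<in> zariski_closure H"
    using H subset_zariski_closure unfolding subgroup_SL2_def by blast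
  show "adj2 A \<in> zariski_closure H" if "A \<in> zariski_closure H" for A
    using zariski_closure_poly_map[OF poly_map_adj2 _ that] subgroup_SL2_adj2[OF H]
      subset_zariski_closure by blast
  show "A ** B \<in> zariski_closure H"
    if A: "A \<in> zariski_closure H" and B: "B \<in> zariski_closure H" for A B
  proof -
    have "s ** B \<in> zariski_closure H" if "s \<in> H" for s
      using zariski_closure_poly_map[OF poly_map_mult[OF poly_map_const poly_map_id] _ B]
        subgroup_SL2_mult[OF H that] subset_zariski_closure by blast
    then show ?thesis
      using zariski_closure_poly_map[OF poly_map_mult[OF poly_map_id poly_map_const] _ A] by blast
  qed
qed

lemma zariski_dense_SL2_iff: "zariski_dense_SL2 G \<longleftrightarrow> SL2 \<subseteq> zariski_closure (ac_mat ` G)"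
  unfolding zariski_dense_SL2_def zariski_closure_def by auto

section \<open>Roots of unity\<close>

lemma alg_closed_field_infinite: "infinite (UNIV :: 'a::alg_closed_field set)"
proof
  assume fin: "finite (UNIV :: 'a set)"
  define q :: "'a poly" where "q = (\<Prod>a\<in>UNIV. [:-a, 1:])"
  have "Polynomial.degree q = card (UNIV :: 'a set)"
    unfolding q_def by (subst degree_prod_eq_sum_degree) auto
  then have "Polynomial.degree (q + 1) > 0"
    using fin by (simp add: degree_add_eq_left finite_UNIV_card_ge_0)
  then obtain x where "poly (q + 1) x = 0"
    using alg_closed_imp_poly_has_root by blast
  moreover have "poly q x = 0"
    unfolding q_def poly_prod using fin by simp
  ultimately show False by simp
qed

lemma ex_not_root_of_unity:
  assumes "infinite (UNIV :: 'a::field set)" "n > 0"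
  shows "\<exists>t::'a. t \<noteq> 0 \<and> t ^ n \<noteq> 1"
proof -
  have "Polynomial.monom 1 n - 1 \<noteq> (0 :: 'a poly)"
    using assms(2) by (simp add: poly_eq_iff) metis
  then have "finite {t::'a. poly (Polynomial.monom 1 n - 1) t = 0}"
    by (rule poly_roots_finite)
  then obtain t where "t \<notin> insert 0 {t::'a. poly (Polynomial.monom 1 n - 1) t = 0}"
    using ex_new_if_finite[OF assms(1)] by blast
  then show ?thesis by (auto simp: poly_monom)
qed

lemma inj_power_if_not_root_of_unity:
  fixes l :: "'a::field"
  assumes "l \<noteq> 0" "\<And>n. n > 0 \<Longrightarrow> l ^ n \<noteq> 1"
  shows "inj (\<lambda>n. l ^ n)"
proof -
  have "m = n" if "l ^ m = l ^ n" "m \<le> n" for m n :: nat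
  proof -
    have "l ^ m * l ^ (n - m) = l ^ n"
      using that(2) by (simp flip: power_add)
    then have "l ^ m * l ^ (n - m) = l ^ m * 1"
      using that(1) by simp
    then have "l ^ (n - m) = 1"
      using assms(1) by simp
    then show ?thesis
      using assms(2)[of "n - m"] that(2) by linarith
  qed
  then show ?thesis
    by (metis injI nle_le)
qed

section \<open>The trace defect\<close>

definition trace_defect :: "('a::comm_ring_1)^2^2 \<Rightarrow> 'a^2^2 \<Rightarrow> 'a" where
  "trace_defect a b =
     trace (mpow a 2 ** mpow b 2 ** mpow a 2 ** mpow b 2) - trace (mpow a 4 ** mpow b 4)"

lemma trace_defect_ac_mat: "trace_defect (ac_mat a) (ac_mat b) = to_ac (trace_defect a b)"
  unfolding trace_defect_def by (simp add: ac_mat_mpow ac_mat_mult trace_ac_mat[symmetric])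

lemma poly_fun_trace_defect_left: "(\<lambda>A. trace_defect A B) \<in> poly_fun"
  unfolding trace_defect_def
  by (intro poly_fun_diff poly_fun_trace poly_map_mult poly_map_mpow poly_map_const poly_map_id)

lemma poly_fun_trace_defect_right: "(\<lambda>B. trace_defect A B) \<in> poly_fun"
  unfolding trace_defect_def
  by (intro poly_fun_diff poly_fun_trace poly_map_mult poly_map_mpow poly_map_const poly_map_id)

lemma trace_defect_zariski_closure:
  assumes "\<And>a b. a \<in> S \<Longrightarrow> b \<in> S \<Longrightarrow> trace_defect a b = 0"
    and "A \<in> zariski_closure S" "B \<in> zariski_closure S"
  shows "trace_defect A B = 0"
proof -
  have "trace_defect a B = 0" if "a \<in> S" for a
    using zariski_closureD[OF assms(3) poly_fun_trace_defect_right] assms(1) that by blast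
  then show ?thesis
    using zariski_closureD[OF assms(2) poly_fun_trace_defect_left] by blast
qed

lemma trace_defect_conj:
  assumes "P ** Q = mat 1" "Q ** P = mat 1"
  shows "trace_defect (Q ** A ** P) (Q ** B ** P) = trace_defect A B"
proof -
  have PQ': "P ** (Q ** R) = R" for R :: "'a^2^2"
    by (simp add: matrix_mul_assoc assms(1))
  have conj_mult: "(Q ** R ** P) ** (Q ** R' ** P) = Q ** (R ** R') ** P" for R R'
    by (simp add: matrix_mul_assoc[symmetric] PQ')
  have trace_conj: "trace (Q ** R ** P) = trace R" for R
    using trace_mul_sym[of "Q ** R" P] by (simp add: PQ' matrix_mul_assoc[symmetric])
  show ?thesis
    unfolding trace_defect_def mpow_conj[OF assms] conj_mult trace_conj ..
qed

lemma trace_defect_eq_0_if_squares_commute: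
  assumes "(a ** a) ** (b ** b) = (b ** b) ** (a ** a)"
  shows "trace_defect a b = 0"
proof -
  define A B where "A = a ** a" and "B = b ** b"
  have "A ** B ** A ** B = A ** (B ** A) ** B"
    by (simp add: matrix_mul_assoc)
  also have "\<dots> = A ** (A ** B) ** B"
    using assms by (simp add: A_def B_def)
  also have "\<dots> = A ** A ** B ** B"
    by (simp add: matrix_mul_assoc)
  finally show ?thesis
    unfolding trace_defect_def mpow_2 mpow_4 A_def B_def by (simp add: matrix_mul_assoc)
qed

lemma trace_defect_upper: "trace_defect (mat2 a b 0 d) (mat2 a' b' 0 d') = 0"
  by (simp add: trace_defect_def mpow_2 mpow_4 algebra_simps)

lemma trace_defect_lower: "trace_defect (mat2 a 0 c d) (mat2 a' 0 c' d') = 0"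
  by (simp add: trace_defect_def mpow_2 mpow_4 algebra_simps)

text \<open>Monomial matrices form the normaliser of the diagonal torus.\<close>

definition monomial2 :: "('a::comm_ring_1)^2^2 \<Rightarrow> bool" where
  "monomial2 A \<longleftrightarrow> (A$1$2 = 0 \<and> A$2$1 = 0) \<or> (A$1$1 = 0 \<and> A$2$2 = 0)"

lemma trace_defect_monomial2:
  assumes "monomial2 a" "monomial2 b"
  shows "trace_defect a b = 0"
proof -
  have "\<exists>u v. A ** A = mat2 u 0 0 v" if "monomial2 A" for A :: "'a^2^2"
    using that unfolding monomial2_def by (cases A rule: mat2_cases) auto
  then obtain u v u' v' where "a ** a = mat2 u 0 0 v" "b ** b = mat2 u' 0 0 v'"
    using assms by meson
  then show ?thesis
    by (intro trace_defect_eq_0_if_squares_commute) (simp add: mult.commute)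
qed

lemma trace_defect_diag2:
  assumes "(x::'a::field) \<noteq> 0"
  shows "trace_defect (diag2 x) (mat2 1 1 (-1) 0) = (x * x - 1 / (x * x))\<^sup>2"
  using assms unfolding trace_defect_def diag2_def
  by (simp add: mpow_2 mpow_4 field_simps power2_eq_square)

lemma ex_SL2_trace_defect_ne_0:
  assumes "infinite (UNIV :: 'a::field set)"
  shows "\<exists>A\<in>SL2. \<exists>B\<in>SL2. trace_defect A (B :: 'a^2^2) \<noteq> 0"
proof -
  obtain x :: 'a where "x \<noteq> 0" "x ^ 4 \<noteq> 1"
    using ex_not_root_of_unity[OF assms, of 4] by auto
  then have "x * x - 1 / (x * x) \<noteq> 0"
    by (auto simp: field_simps eval_nat_numeral)
  then have "trace_defect (diag2 x) (mat2 1 1 (-1) 0) \<noteq> 0"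
    using trace_defect_diag2[OF \<open>x \<noteq> 0\<close>] by simp
  moreover have "diag2 x \<in> SL2" "mat2 1 1 (-1) (0::'a) \<in> SL2"
    using \<open>x \<noteq> 0\<close> by (simp_all add: SL2_def diag2_def)
  ultimately show ?thesis
    by blast
qed

section \<open>A torus in the Zariski closure\<close>

lemma poly_fun_on_laurent_curve:
  fixes F :: "'a::field \<Rightarrow> 'a^2^2"
  assumes "p \<in> poly_fun" and F: "\<And>i j. \<exists>a b. \<forall>t. F t $ i $ j = a * t + b / t"
  shows "\<exists>N r. \<forall>t. t \<noteq> 0 \<longrightarrow> t ^ N * p (F t) = poly r t"
  using assms(1)
proof induction
  case (const c)
  show ?case
    by (rule exI[of _ 0], rule exI[of _ "[:c:]"]) simp
next
  case (coord i j)
  obtain a b where "\<forall>t. F t $ i $ j = a * t + b / t"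
    using F by blast
  then show ?case
    by (intro exI[of _ 1] exI[of _ "[:b, 0, a:]"]) (simp add: field_simps)
next
  case (add p q)
  obtain N r where "\<forall>t. t \<noteq> 0 \<longrightarrow> t ^ N * p (F t) = poly r t"
    using add.IH(1) by blast
  moreover obtain M s where "\<forall>t. t \<noteq> 0 \<longrightarrow> t ^ M * q (F t) = poly s t"
    using add.IH(2) by blast
  ultimately show ?case
    by (intro exI[of _ "N + M"] exI[of _ "Polynomial.monom 1 M * r + Polynomial.monom 1 N * s"])
      (simp add: poly_monom power_add distrib_left mult.assoc mult.left_commute)
next
  case (mult p q)
  obtain N r where r: "\<forall>t. t \<noteq> 0 \<longrightarrow> t ^ N * p (F t) = poly r t"
    using mult.IH(1) by blast
  obtain M s where s: "\<forall>t. t \<noteq> 0 \<longrightarrow> t ^ M * q (F t) = poly s t"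
    using mult.IH(2) by blast
  have "t ^ (N + M) * (p (F t) * q (F t)) = poly (r * s) t" if "t \<noteq> 0" for t
  proof -
    have "t ^ (N + M) * (p (F t) * q (F t)) = (t ^ N * p (F t)) * (t ^ M * q (F t))"
      by (simp add: power_add mult_ac)
    then show ?thesis
      using r s that by simp
  qed
  then show ?case
    by blast
qed

lemma poly_fun_vanishing_on_laurent_curve:
  fixes F :: "'a::field \<Rightarrow> 'a^2^2"
  assumes "p \<in> poly_fun" "\<And>i j. \<exists>a b. \<forall>t. F t $ i $ j = a * t + b / t"
    and "infinite Z" "\<And>z. z \<in> Z \<Longrightarrow> z \<noteq> 0 \<and> p (F z) = 0" "t \<noteq> 0"
  shows "p (F t) = 0"
proof -
  obtain N r where r: "\<And>t. t \<noteq> 0 \<Longrightarrow> t ^ N * p (F t) = poly r t"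
    using poly_fun_on_laurent_curve[OF assms(1,2)] by blast
  have "Z \<subseteq> {x. poly r x = 0}"
  proof
    fix z assume "z \<in> Z"
    then show "z \<in> {x. poly r x = 0}"
      using assms(4) r[of z, symmetric] by simp
  qed
  then have "r = 0"
    using assms(3) poly_roots_finite finite_subset by blast
  then show ?thesis
    using r[OF assms(5)] assms(5) by simp
qed

text \<open>The matrix \<open>E = mat2 e f g (1 - e)\<close> is a rank-one idempotent, and the right-hand
  side below is \<open>x E + y (1 - E)\<close>.\<close>

lemma rank_one_idempotent_diagonalize:
  fixes e f g :: "'a::field"
  assumes "f * g = e * (1 - e)"
  obtains P Q where "P ** Q = mat 1" "Q ** P = mat 1"
    "\<And>x y. P ** mat2 x 0 0 y ** Q = mat2 (x*e + y*(1-e)) ((x-y)*f) ((x-y)*g) (x*(1-e) + y*e)"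
proof (cases "e = 0")
  case True
  then have "f * g = 0"
    using assms by simp
  then show ?thesis
    using True by (intro that[of "mat2 f 1 1 (-g)" "mat2 g 1 1 (-f)"])
      (auto simp: mat_eq_mat2 algebra_simps)
next
  case False
  then show ?thesis
    using assms
    by (intro that[of "mat2 e (-f) g e" "mat2 1 (f/e) (-g/e) 1"])
      (auto simp: mat_eq_mat2 field_simps, simp_all flip: distrib_left)
qed

lemma SL2_diagonalize:
  fixes A :: "('a::field)^2^2"
  assumes det: "det A = 1" and eig: "det (A - mat l) = 0" and l: "l * l \<noteq> 1"
  obtains P Q where "P ** Q = mat 1" "Q ** P = mat 1" "A = P ** diag2 l ** Q"
proof -
  obtain a b c d where A: "A = mat2 a b c d"
    by (rule mat2_cases)
  have "l \<noteq> 0"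
    using det eig by (auto simp: A mat_eq_mat2)
  define m where "m = 1 / l"
  have lm: "l * m = 1"
    using \<open>l \<noteq> 0\<close> by (simp add: m_def)
  define k where "k = l - m"
  have "k \<noteq> 0"
    using l lm by (auto simp: k_def)
  have "(a + d) * l = l * l + 1"
    using det eig by (simp add: A mat_eq_mat2 algebra_simps)
  then have d: "d = l + m - a"
    using \<open>l \<noteq> 0\<close> by (simp add: m_def field_simps)
  have bc: "b * c = (a - m) * (l - a)"
    using det lm by (simp add: A d algebra_simps)
  define e where "e = (a - m) / k"
    \<comment> \<open>\<open>mat2 e (b/k) (c/k) (1 - e)\<close> is the spectral projection \<open>(A - m) / (l - m)\<close>\<close>
  have e1: "1 - e = (l - a) / k"
    using \<open>k \<noteq> 0\<close> by (simp add: e_def k_def field_simps)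
  have "b / k * (c / k) = e * (1 - e)"
    unfolding e1 by (simp add: e_def bc)
  then obtain P Q where PQ: "P ** Q = mat 1" "Q ** P = mat 1"
    and conj: "\<And>x y. P ** mat2 x 0 0 y ** Q =
      mat2 (x*e + y*(1-e)) ((x-y) * (b / k)) ((x-y) * (c / k)) (x*(1-e) + y*e)"
    using rank_one_idempotent_diagonalize by blast
  have "A = P ** diag2 l ** Q"
    unfolding diag2_def m_def[symmetric] conj e1 using \<open>k \<noteq> 0\<close>
    by (simp add: A d e_def field_simps) (simp add: k_def algebra_simps)
  with PQ that show thesis
    by blast
qed

lemma zariski_closure_torus:
  fixes S :: "(('a::field)^2^2) set"
  assumes S: "subgroup_SL2 S" and g: "g \<in> S" and eig: "det (g - mat l) = 0"
    and l: "\<And>n. n > 0 \<Longrightarrow> l ^ n \<noteq> 1"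
  obtains P Q where "P ** Q = mat 1" "Q ** P = mat 1"
    "\<And>t. t \<noteq> 0 \<Longrightarrow> P ** diag2 t ** Q \<in> zariski_closure S"
proof -
  have "l \<noteq> 0"
    using eig subgroup_SL2_det[OF S g] by auto
  have "l * l \<noteq> 1"
    using l[of 2] by (simp add: power2_eq_square)
  then obtain P Q where PQ: "P ** Q = mat 1" "Q ** P = mat 1" and gPQ: "g = P ** diag2 l ** Q"
    using SL2_diagonalize[OF subgroup_SL2_det[OF S g] eig] by blast
  have powers: "P ** diag2 (l ^ n) ** Q = mpow g n" for n
    using mpow_conj[of Q P "diag2 l" n] PQ by (simp add: gPQ mpow_diag2)
  have "P ** diag2 t ** Q \<in> zariski_closure S" if "t \<noteq> 0" for t
    unfolding zariski_closure_def
  proof (intro CollectI ballI impI)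
    fix p assume p: "p \<in> poly_fun" and "\<forall>s\<in>S. p s = 0"
    then have "z \<noteq> 0 \<and> p (P ** diag2 z ** Q) = 0" if "z \<in> range (\<lambda>n. l ^ n)" for z
      using that \<open>l \<noteq> 0\<close> subgroup_SL2_mpow[OF S g] by (auto simp: powers)
    moreover have "infinite (range (\<lambda>n. l ^ n))"
      using range_inj_infinite inj_power_if_not_root_of_unity[OF \<open>l \<noteq> 0\<close> l] by blast
    ultimately show "p (P ** diag2 t ** Q) = 0"
      using poly_fun_vanishing_on_laurent_curve[OF p _ _ _ that, of "\<lambda>t. P ** diag2 t ** Q"]
      by (metis conj_diag2_nth)
  qed
  with PQ that show thesis
    by blast
qed

section \<open>Subgroups containing a torus\<close>

lemma SL2_subset_if_unipotents:
  fixes H :: "(('a::field)^2^2) set"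
  assumes H: "subgroup_SL2 H" and torus: "\<And>t. t \<noteq> 0 \<Longrightarrow> diag2 t \<in> H"
    and U: "\<And>u. upper_unipotent u \<in> H" and L: "\<And>u. lower_unipotent u \<in> H"
  shows "SL2 \<subseteq> H"
proof -
  have big_cell: "B \<in> H" if "det B = 1" "B $ 1 $ 1 \<noteq> 0" for B :: "'a^2^2"
  proof -
    obtain a b c d where B: "B = mat2 a b c d"
      by (rule mat2_cases)
    with that have "a \<noteq> 0" "a * d - b * c = 1"
      by auto
    then have "B = lower_unipotent (c/a) ** diag2 a ** upper_unipotent (b/a)"
      by (simp add: B lower_unipotent_def diag2_def upper_unipotent_def field_simps)
    then show ?thesis
      using U L torus \<open>a \<noteq> 0\<close> subgroup_SL2_mult[OF H] by metis
  qed
  show ?thesis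
  proof
    fix B :: "'a^2^2" assume "B \<in> SL2"
    then have B: "det B = 1"
      by (simp add: SL2_def)
    show "B \<in> H"
    proof (cases "B $ 1 $ 1 = 0")
      case True
      obtain a b c d where Bm: "B = mat2 a b c d"
        by (rule mat2_cases)
      then have "B ** lower_unipotent 1 \<in> H"
        using True B by (intro big_cell) (auto simp: lower_unipotent_def algebra_simps)
      then have "B ** lower_unipotent 1 ** lower_unipotent (-1) \<in> H"
        using L subgroup_SL2_mult[OF H] by blast
      then show ?thesis
        by (simp add: Bm lower_unipotent_def)
    qed (use B big_cell in blast)
  qed
qed

lemma upper_unipotent_mem_if_upper_triangular:
  fixes H :: "(('a::alg_closed_field)^2^2) set"
  assumes H: "subgroup_SL2 H" and torus: "\<And>t. t \<noteq> 0 \<Longrightarrow> diag2 t \<in> H"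
    and A: "mat2 p q 0 s \<in> H" and "q \<noteq> 0"
  shows "upper_unipotent u \<in> H"
proof (cases "u = 0")
  case True
  then show ?thesis
    using H by (simp add: subgroup_SL2_def upper_unipotent_def mat_eq_mat2)
next
  case False
  have "p * s = 1" "p \<noteq> 0"
    using subgroup_SL2_det[OF H A] by auto
  obtain \<tau> where \<tau>: "\<tau> ^ 2 = u * p / q"
    using nth_root_exists[of 2 "u * p / q"] by auto
  then have "\<tau> \<noteq> 0"
    using False \<open>p \<noteq> 0\<close> \<open>q \<noteq> 0\<close> by auto
  have "diag2 (1/p) ** (diag2 \<tau> ** mat2 p q 0 s ** diag2 (1/\<tau>)) = upper_unipotent u"
    using \<open>p * s = 1\<close> \<open>p \<noteq> 0\<close> \<open>q \<noteq> 0\<close> \<open>\<tau> \<noteq> 0\<close> \<tau>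
    by (simp add: diag2_def upper_unipotent_def field_simps power2_eq_square)
  moreover have "diag2 (1/p) ** (diag2 \<tau> ** mat2 p q 0 s ** diag2 (1/\<tau>)) \<in> H"
    using A torus \<open>\<tau> \<noteq> 0\<close> \<open>p \<noteq> 0\<close> subgroup_SL2_mult[OF H] by simp
  ultimately show ?thesis
    by simp
qed

lemma lower_unipotent_mem_if_upper_unipotents:
  assumes H: "subgroup_SL2 H" and U: "\<And>u. upper_unipotent u \<in> H"
    and A: "mat2 p q r s \<in> H" and "r \<noteq> 0"
  shows "lower_unipotent u \<in> H"
proof -
  have "p * s - q * r = 1"
    using subgroup_SL2_det[OF H A] by simp
  then have "upper_unipotent (-p/r) ** mat2 p q r s ** upper_unipotent (-s/r) = mat2 0 (-1/r) r 0"
    using \<open>r \<noteq> 0\<close> by (simp add: upper_unipotent_def field_simps)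
  then have w: "mat2 0 (-1/r) r 0 \<in> H"
    \<comment> \<open>a Weyl element: conjugation by it exchanges upper and lower unipotents\<close>
    using U A subgroup_SL2_mult[OF H] by metis
  have "mat2 0 (-1/r) r 0 ** upper_unipotent (-u/(r*r)) ** adj2 (mat2 0 (-1/r) r 0) = lower_unipotent u"
    using \<open>r \<noteq> 0\<close> by (simp add: upper_unipotent_def lower_unipotent_def field_simps)
  then show ?thesis
    using w U subgroup_SL2_adj2[OF H w] subgroup_SL2_mult[OF H] by metis
qed

lemma SL2_subset_if_upper_triangular_and_lower_entry:
  fixes H :: "(('a::alg_closed_field)^2^2) set" and A B :: "'a^2^2"
  assumes H: "subgroup_SL2 H" and torus: "\<And>t. t \<noteq> 0 \<Longrightarrow> diag2 t \<in> H"
    and "A \<in> H" "A $ 2 $ 1 = 0" "A $ 1 $ 2 \<noteq> 0" and "B \<in> H" "B $ 2 $ 1 \<noteq> 0"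
  shows "SL2 \<subseteq> H"
proof -
  have U: "upper_unipotent u \<in> H" for u
    using assms(3-5) mat2_eta[of A]
      upper_unipotent_mem_if_upper_triangular[OF H torus, of "A$1$1" "A$1$2" "A$2$2"]
    by metis
  have "lower_unipotent u \<in> H" for u
    using assms(6,7) lower_unipotent_mem_if_upper_unipotents[OF H U] mat2_eta[of B] by metis
  with U show ?thesis
    using SL2_subset_if_unipotents[OF H torus] by blast
qed

lemma conj_diag2_mat2:
  assumes "t \<noteq> 0"
  shows "mat2 p q r s ** diag2 t ** adj2 (mat2 p q r s) =
    mat2 ((p * s * (t * t) - q * r) / t) (p * q * (1 - t * t) / t)
      (r * s * (t * t - 1) / t) ((p * s - q * r * (t * t)) / t)"
  using assms by (simp add: diag2_def field_simps)

lemma ex_triangular_if_zero_diagonal_entry: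
  fixes H :: "(('a::field)^2^2) set" and A :: "'a^2^2"
  assumes "infinite (UNIV :: 'a set)"
    and H: "subgroup_SL2 H" and torus: "\<And>t. t \<noteq> 0 \<Longrightarrow> diag2 t \<in> H"
    and "A \<in> H" "A$1$1 * A$2$2 = 0" "A$1$1 \<noteq> 0 \<or> A$2$2 \<noteq> 0"
  shows "\<exists>B\<in>H. (B$2$1 = 0 \<and> B$1$2 \<noteq> 0) \<or> (B$1$2 = 0 \<and> B$2$1 \<noteq> 0)"
proof -
  obtain p q r s where A: "A = mat2 p q r s"
    by (rule mat2_cases)
  obtain t :: 'a where "t \<noteq> 0" "t ^ 2 \<noteq> 1"
    using ex_not_root_of_unity[OF assms(1), of 2] by auto
  then have t: "t \<noteq> 0" "t * t - 1 \<noteq> 0" "1 - t * t \<noteq> 0"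
    by (auto simp: power2_eq_square)
  have "q * r \<noteq> 0"
    using subgroup_SL2_det[OF H \<open>A \<in> H\<close>] assms(5) by (auto simp: A)
  let ?M = "A ** diag2 t ** adj2 A"
  have "?M \<in> H"
    by (intro subgroup_SL2_mult[OF H] \<open>A \<in> H\<close> torus t(1) subgroup_SL2_adj2[OF H])
  moreover have "(?M$2$1 = 0 \<and> ?M$1$2 \<noteq> 0) \<or> (?M$1$2 = 0 \<and> ?M$2$1 \<noteq> 0)"
    unfolding A conj_diag2_mat2[OF t(1)] using assms(5,6) \<open>q * r \<noteq> 0\<close> t by (auto simp: A)
  ultimately show ?thesis
    by blast
qed

lemma ex_zero_diagonal_entry_if_diag_product_ne_half:
  fixes H :: "(('a::alg_closed_field)^2^2) set" and A :: "'a^2^2"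
  assumes H: "subgroup_SL2 H" and torus: "\<And>t. t \<noteq> 0 \<Longrightarrow> diag2 t \<in> H"
    and "A \<in> H" "A$1$1 * A$2$2 \<noteq> 0" "A$1$2 * A$2$1 \<noteq> 0" "2 * (A$1$1 * A$2$2) \<noteq> 1"
  shows "\<exists>B\<in>H. B$1$1 * B$2$2 = 0 \<and> (B$1$1 \<noteq> 0 \<or> B$2$2 \<noteq> 0)"
proof -
  obtain p q r s where A: "A = mat2 p q r s"
    by (rule mat2_cases)
  have ps: "p * s \<noteq> 0" "2 * (p * s) \<noteq> 1" and "q * r \<noteq> 0"
    using assms(4-6) by (simp_all add: A)
  have qr: "q * r = p * s - 1"
    using subgroup_SL2_det[OF H \<open>A \<in> H\<close>] by (simp add: A algebra_simps)
  obtain \<tau> :: 'a where \<tau>: "\<tau> ^ 2 = q * r / (p * s)"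
    using nth_root_exists[of 2 "q * r / (p * s)"] by auto
  then have "\<tau> \<noteq> 0"
    using ps \<open>q * r \<noteq> 0\<close> by auto
  let ?M = "A ** diag2 \<tau> ** adj2 A"
  have "?M \<in> H"
    by (intro subgroup_SL2_mult[OF H] \<open>A \<in> H\<close> torus \<open>\<tau> \<noteq> 0\<close> subgroup_SL2_adj2[OF H])
  moreover have "?M $ 1 $ 1 = 0"
    unfolding A conj_diag2_mat2[OF \<open>\<tau> \<noteq> 0\<close>] using \<tau> ps by (simp add: power2_eq_square)
  moreover have "?M $ 2 $ 2 \<noteq> 0"
  proof
    assume "?M $ 2 $ 2 = 0"
    then have "p * s = q * r * \<tau> ^ 2"
      unfolding A conj_diag2_mat2[OF \<open>\<tau> \<noteq> 0\<close>] using \<open>\<tau> \<noteq> 0\<close> by (simp add: power2_eq_square)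
    then have "(p * s) * (p * s) = (p * s - 1) * (p * s - 1)"
      using \<tau> ps(1) by (simp add: qr field_simps)
    then show False
      using ps(2) by (simp add: algebra_simps)
  qed
  ultimately show ?thesis
    by auto
qed

text \<open>If \<open>2 p s = 1\<close> (equivalently \<open>p\<^sup>2s\<^sup>2 = q\<^sup>2r\<^sup>2\<close>), the square root chosen in the previous
  lemma kills both diagonal entries; a generic conjugate of a torus element leaves this case.\<close>

lemma ex_diag_product_ne_half:
  fixes H :: "(('a::field)^2^2) set" and A :: "'a^2^2"
  assumes "infinite (UNIV :: 'a set)"
    and H: "subgroup_SL2 H" and torus: "\<And>t. t \<noteq> 0 \<Longrightarrow> diag2 t \<in> H"
    and "A \<in> H" "2 * (A$1$1 * A$2$2) = 1"
  shows "\<exists>B\<in>H. B$1$1 * B$2$2 \<noteq> 0 \<and> B$1$2 * B$2$1 \<noteq> 0 \<and> 2 * (B$1$1 * B$2$2) \<noteq> 1"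
proof -
  obtain p q r s where A: "A = mat2 p q r s"
    by (rule mat2_cases)
  define h where "h = p * s"
  have h: "2 * h = 1" "h \<noteq> 0"
    using assms(5) by (auto simp: A h_def)
  have "q * r = h - 1"
    using subgroup_SL2_det[OF H \<open>A \<in> H\<close>] by (simp add: A h_def algebra_simps)
  also have "\<dots> = h - 2 * h"
    using h(1) by simp
  finally have qr: "q * r = - h"
    by simp
  obtain t :: 'a where "t \<noteq> 0" "t ^ 8 \<noteq> 1"
    using ex_not_root_of_unity[OF assms(1), of 8] by auto
  moreover have "t ^ 8 - 1 = (t * t - 1) * (t * t + 1) * (t * t * (t * t) + 1)"
    by (simp add: algebra_simps eval_nat_numeral)
  ultimately have t: "t \<noteq> 0" "t * t - 1 \<noteq> 0" "t * t + 1 \<noteq> 0" "t * t * (t * t) + 1 \<noteq> 0"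
    by auto
  let ?M = "A ** diag2 t ** adj2 A"
  have "?M \<in> H"
    by (intro subgroup_SL2_mult[OF H] \<open>A \<in> H\<close> torus t(1) subgroup_SL2_adj2[OF H])
  moreover have diagonal: "?M $ 1 $ 1 = h * (t * t + 1) / t" "?M $ 2 $ 2 = h * (t * t + 1) / t"
    unfolding A conj_diag2_mat2[OF t(1)] by (simp_all add: qr h_def[symmetric] algebra_simps)
  moreover have "?M $ 1 $ 2 * ?M $ 2 $ 1 = - (p * s) * (q * r) * ((t * t - 1) * (t * t - 1)) / (t * t)"
    unfolding A conj_diag2_mat2[OF t(1)] by (simp add: field_simps)
  moreover have "2 * (h * (t * t + 1) / t * (h * (t * t + 1) / t)) \<noteq> 1"
  proof
    assume "2 * (h * (t * t + 1) / t * (h * (t * t + 1) / t)) = 1"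
    moreover have "2 * (h * (t * t + 1) / t * (h * (t * t + 1) / t)) * (2 * (t * t)) =
        (2 * h) * (2 * h) * ((t * t + 1) * (t * t + 1))"
      using t(1) by (simp add: field_simps)
    ultimately have "(2 * h) * (2 * h) * ((t * t + 1) * (t * t + 1)) = 2 * (t * t)"
      by simp
    then have "(t * t + 1) * (t * t + 1) = 2 * (t * t)"
      unfolding h(1) by simp
    then show False
      using t(4) by (simp add: algebra_simps)
  qed
  ultimately show ?thesis
    using t h(2) qr by (intro bexI[of _ ?M]) (auto simp: h_def)
qed

lemma ex_triangular_if_not_monomial2:
  fixes H :: "(('a::alg_closed_field)^2^2) set" and A :: "'a^2^2"
  assumes H: "subgroup_SL2 H" and torus: "\<And>t. t \<noteq> 0 \<Longrightarrow> diag2 t \<in> H"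
    and "A \<in> H" "\<not> monomial2 A"
  shows "\<exists>B\<in>H. (B$2$1 = 0 \<and> B$1$2 \<noteq> 0) \<or> (B$1$2 = 0 \<and> B$2$1 \<noteq> 0)"
proof -
  note inf = alg_closed_field_infinite
  have diag_product_ne_half: "\<exists>B\<in>H. (B$2$1 = 0 \<and> B$1$2 \<noteq> 0) \<or> (B$1$2 = 0 \<and> B$2$1 \<noteq> 0)"
    if "C \<in> H" "C$1$1 * C$2$2 \<noteq> 0" "C$1$2 * C$2$1 \<noteq> 0" "2 * (C$1$1 * C$2$2) \<noteq> 1" for C
    using ex_zero_diagonal_entry_if_diag_product_ne_half[OF H torus that]
      ex_triangular_if_zero_diagonal_entry[OF inf H torus] by blast
  consider "A$1$2 * A$2$1 = 0" | "A$1$1 * A$2$2 = 0" | "A$1$1 * A$2$2 \<noteq> 0" "A$1$2 * A$2$1 \<noteq> 0"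
    by blast
  then show ?thesis
  proof cases
    case 1
    then show ?thesis
      using assms(3,4) by (auto simp: monomial2_def)
  next
    case 2
    then show ?thesis
      using assms(4) ex_triangular_if_zero_diagonal_entry[OF inf H torus assms(3)]
      by (auto simp: monomial2_def)
  next
    case 3
    show ?thesis
    proof (cases "2 * (A$1$1 * A$2$2) = 1")
      case True
      then show ?thesis
        using ex_diag_product_ne_half[OF inf H torus assms(3)] diag_product_ne_half by blast
    qed (use 3 assms(3) diag_product_ne_half in blast)
  qed
qed

lemma SL2_subset_if_lower_triangular_and_upper_entry:
  fixes H :: "(('a::alg_closed_field)^2^2) set" and A B :: "'a^2^2"
  assumes H: "subgroup_SL2 H" and torus: "\<And>t. t \<noteq> 0 \<Longrightarrow> diag2 t \<in> H"
    and "A \<in> H" "A $ 1 $ 2 = 0" "A $ 2 $ 1 \<noteq> 0" and "B \<in> H" "B $ 1 $ 2 \<noteq> 0"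
  shows "SL2 \<subseteq> H"
proof
  have "transpose (diag2 t) = diag2 t" for t :: 'a
    by (simp add: diag2_def)
  then have "diag2 t \<in> transpose ` H" if "t \<noteq> 0" for t
    using torus[OF that] by (metis image_eqI)
  moreover have "transpose A \<in> transpose ` H" "transpose B \<in> transpose ` H"
    using assms(3,6) by auto
  ultimately have "SL2 \<subseteq> transpose ` H"
    using SL2_subset_if_upper_triangular_and_lower_entry[OF subgroup_SL2_transpose[OF H]] assms(4,5,7)
    by (simp add: transpose_def)
  fix M :: "'a^2^2" assume "M \<in> SL2"
  then have "transpose M \<in> transpose ` H"
    using \<open>SL2 \<subseteq> transpose ` H\<close> by (auto simp: SL2_def)
  then show "M \<in> H"
    by auto
qed

lemma SL2_subset_if_trace_defect:
  fixes H :: "(('a::alg_closed_field)^2^2) set"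
  assumes H: "subgroup_SL2 H" and torus: "\<And>t. t \<noteq> 0 \<Longrightarrow> diag2 t \<in> H"
    and "a \<in> H" "b \<in> H" "trace_defect a b \<noteq> 0"
  shows "SL2 \<subseteq> H"
proof -
  have "\<not> monomial2 a \<or> \<not> monomial2 b"
    using trace_defect_monomial2 assms(5) by blast
  then obtain B where B: "B \<in> H" "(B$2$1 = 0 \<and> B$1$2 \<noteq> 0) \<or> (B$1$2 = 0 \<and> B$2$1 \<noteq> 0)"
    using ex_triangular_if_not_monomial2[OF H torus] assms(3,4) by blast
  have "\<exists>C\<in>H. C$2$1 \<noteq> 0"
  proof (rule ccontr)
    assume "\<not> ?thesis"
    then have "a = mat2 (a$1$1) (a$1$2) 0 (a$2$2)" "b = mat2 (b$1$1) (b$1$2) 0 (b$2$2)"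
      using assms(3,4) by (auto simp: vec_eq_iff forall_2)
    then show False
      using assms(5) trace_defect_upper by metis
  qed
  then obtain C where C: "C \<in> H" "C$2$1 \<noteq> 0" ..
  have "\<exists>C\<in>H. C$1$2 \<noteq> 0"
  proof (rule ccontr)
    assume "\<not> ?thesis"
    then have "a = mat2 (a$1$1) 0 (a$2$1) (a$2$2)" "b = mat2 (b$1$1) 0 (b$2$1) (b$2$2)"
      using assms(3,4) by (auto simp: vec_eq_iff forall_2)
    then show False
      using assms(5) trace_defect_lower by metis
  qed
  then obtain C' where C': "C' \<in> H" "C'$1$2 \<noteq> 0" ..
  from B(2) show ?thesis
    using SL2_subset_if_upper_triangular_and_lower_entry[OF H torus B(1) _ _ C]
      SL2_subset_if_lower_triangular_and_upper_entry[OF H torus B(1) _ _ C'] by blast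
qed

lemma SL2_subset_if_conj_torus:
  fixes H :: "(('a::alg_closed_field)^2^2) set"
  assumes H: "subgroup_SL2 H" and PQ: "P ** Q = mat 1" "Q ** P = mat 1"
    and torus: "\<And>t. t \<noteq> 0 \<Longrightarrow> P ** diag2 t ** Q \<in> H"
    and "a \<in> H" "b \<in> H" "trace_defect a b \<noteq> 0"
  shows "SL2 \<subseteq> H"
proof
  have conj_back: "P ** (Q ** A ** P) ** Q = A" for A :: "'a^2^2"
  proof -
    have "P ** (Q ** A ** P) ** Q = (P ** Q) ** A ** (P ** Q)"
      by (simp add: matrix_mul_assoc)
    then show ?thesis
      using PQ(1) by simp
  qed
  have "SL2 \<subseteq> {A. P ** A ** Q \<in> H}"
    by (rule SL2_subset_if_trace_defect[OF subgroup_SL2_conj[OF H PQ], of "Q ** a ** P" "Q ** b ** P"])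
      (use torus assms(5-7) in \<open>simp_all add: conj_back trace_defect_conj[OF PQ]\<close>)
  fix M :: "'a^2^2" assume "M \<in> SL2"
  have "det P * det Q = 1"
    using PQ(1) det_mul[of P Q] by simp
  then have "det (Q ** M ** P) = 1"
    using \<open>M \<in> SL2\<close> by (simp add: SL2_def det_mul mult.commute)
  then have "P ** (Q ** M ** P) ** Q \<in> H"
    using \<open>SL2 \<subseteq> {A. P ** A ** Q \<in> H}\<close> by (auto simp: SL2_def)
  then show "M \<in> H"
    by (simp add: conj_back)
qed

lemma SL2_subset_zariski_closure_iff:
  fixes S :: "(('a::alg_closed_field)^2^2) set"
  assumes S: "subgroup_SL2 S" and "g \<in> S" "det (g - mat l) = 0" "\<And>n. n > 0 \<Longrightarrow> l ^ n \<noteq> 1"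
  shows "SL2 \<subseteq> zariski_closure S \<longleftrightarrow> (\<exists>a\<in>S. \<exists>b\<in>S. trace_defect a b \<noteq> 0)"
proof
  assume "SL2 \<subseteq> zariski_closure S"
  then show "\<exists>a\<in>S. \<exists>b\<in>S. trace_defect a b \<noteq> 0"
    using trace_defect_zariski_closure[of S]
      ex_SL2_trace_defect_ne_0[OF alg_closed_field_infinite] by blast
next
  assume "\<exists>a\<in>S. \<exists>b\<in>S. trace_defect a b \<noteq> 0"
  moreover obtain P Q where PQ: "P ** Q = mat 1" "Q ** P = mat 1"
    and torus: "\<And>t. t \<noteq> 0 \<Longrightarrow> P ** diag2 t ** Q \<in> zariski_closure S"
    using zariski_closure_torus[OF assms] by blast
  ultimately show "SL2 \<subseteq> zariski_closure S"
    using SL2_subset_if_conj_torus[OF subgroup_SL2_zariski_closure[OF S] PQ torus]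
      subset_zariski_closure by blast
qed

theorem lemma6p4:
  fixes G :: "(('k::field)^2^2) set"
  assumes "subgroup_SL2 G"
    and "\<exists>g\<in>G. (\<exists>x. eigenvalue_ac g x) \<and>
                (\<forall>x. eigenvalue_ac g x \<longrightarrow> (\<forall>n>0. x ^ n \<noteq> 1))"
  shows "zariski_dense_SL2 G \<longleftrightarrow>
    (\<exists>a\<in>G. \<exists>b\<in>G.
       trace (mpow a 2 ** mpow b 2 ** mpow a 2 ** mpow b 2) - trace (mpow a 4 ** mpow b 4) \<noteq> 0)"
proof -
  obtain g l where g: "g \<in> G" "det (ac_mat g - mat l) = 0" "\<And>n. n > 0 \<Longrightarrow> l ^ n \<noteq> 1"
    using assms(2) unfolding eigenvalue_ac_def by blast
  have "(\<exists>a\<in>G. \<exists>b\<in>G. trace_defect a b \<noteq> 0) \<longleftrightarrow>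
      (\<exists>a\<in>ac_mat ` G. \<exists>b\<in>ac_mat ` G. trace_defect a b \<noteq> 0)"
    by (auto simp: trace_defect_ac_mat)
  then show ?thesis
    unfolding zariski_dense_SL2_iff trace_defect_def[symmetric]
    using SL2_subset_zariski_closure_iff[OF subgroup_SL2_ac_mat_image[OF assms(1)]
        imageI[OF g(1)] g(2,3)]
    by simp
qed

end
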